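(* Let $f:D^n\to\mathbb{R}^d$ have finite global sensitivity $GS_f>0$, let $T\in\mathbb{R}$, and let $U=\{x\in D^n: LS_f(x)>T\}$, assumed nonempty. For $x\in D^n$ let $ud(x)=\min_{y\in U}d(y,x)$. Let $\beta>0$ satisfy $$\beta\le\min_{x\notin U}\frac{1}{ud(x)}\ln\Big(\frac{GS_f}{LS_f(x)}\Big)$$ (with the convention $\ln(GS_f/0)=+\infty$). Then $S(x)=GS_f\cdot e^{-\beta\cdot ud(x)}$ is a $\beta$-smooth upper bound on the local sensitivity of $f$.
   Context: $D^n$ denotes the set of datasets consisting of $n$ elements; Hamming distance $d(x,y)=|\{i:x_i\neq y_i\}|$; neighbors satisfy $d(x,y)=1$. Global sensitivity: $GS_f=\max_{x,y:d(x,y)=1}\|f(x)-f(y)\|_1$. Local sensitivity: $LS_f(x)=\max_{y:d(x,y)=1}\|f(x)-f(y)\|_1$. For $\beta>0$, $S:D^n\to\mathbb{R}$ is a $\beta$-smooth upper bound on the local sensitivity of $f$ if $S(x)\ge LS_f(x)$ for all $x$ and $S(x)\le e^{\beta}S(y)$ for all $x,y$ with $d(x,y)=1$. *)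

theory Defs
  imports "HOL-Analysis.Analysis"
begin

definition datasets :: "nat \<Rightarrow> 'a list set" where
  "datasets n = {x. length x = n}"

text \<open>Hamming distance (for lists of equal length).\<close>
definition hamming :: "'a list \<Rightarrow> 'a list \<Rightarrow> nat" where
  "hamming x y = card {i. i < length x \<and> x ! i \<noteq> y ! i}"

definition l1dist :: "real ^ 'd \<Rightarrow> real ^ 'd \<Rightarrow> real" where
  "l1dist u v = (\<Sum>i\<in>UNIV. \<bar>u $ i - v $ i\<bar>)"

text \<open>Global sensitivity (supremum over neighbouring pairs; 0 if there are none).\<close>
definition GS :: "nat \<Rightarrow> ('a list \<Rightarrow> real ^ 'd) \<Rightarrow> real" where
  "GS n f = Sup (insert 0 {l1dist (f x) (f y) | x y.
      x \<in> datasets n \<and> y \<in> datasets n \<and> hamming x y = 1})"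

text \<open>Local sensitivity at x (supremum over neighbours; 0 if there are none).\<close>
definition LS :: "nat \<Rightarrow> ('a list \<Rightarrow> real ^ 'd) \<Rightarrow> 'a list \<Rightarrow> real" where
  "LS n f x = Sup (insert 0 {l1dist (f x) (f y) | y.
      y \<in> datasets n \<and> hamming x y = 1})"

definition finite_GS :: "nat \<Rightarrow> ('a list \<Rightarrow> real ^ 'd) \<Rightarrow> bool" where
  "finite_GS n f = bdd_above {l1dist (f x) (f y) | x y.
      x \<in> datasets n \<and> y \<in> datasets n \<and> hamming x y = 1}"

definition smooth_upper_bound ::
  "nat \<Rightarrow> real \<Rightarrow> ('a list \<Rightarrow> real ^ 'd) \<Rightarrow> ('a list \<Rightarrow> real) \<Rightarrow> bool" where
  "smooth_upper_bound n \<beta> f S \<longleftrightarrow>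
     (\<forall>x\<in>datasets n. S x \<ge> LS n f x) \<and>
     (\<forall>x\<in>datasets n. \<forall>y\<in>datasets n. hamming x y = 1 \<longrightarrow> S x \<le> exp \<beta> * S y)"

definition ud :: "'a list set \<Rightarrow> 'a list \<Rightarrow> nat" where
  "ud U x = Min ((\<lambda>y. hamming y x) ` U)"

end

theory Submission
  imports Defs
begin

text \<open>Inside U the bound is GS itself, which dominates every local sensitivity. Outside U the
  choice of \<beta> is exactly what makes GS e^(-\<beta> ud(x)) \<ge> LS(x). Smoothness holds because ud is
  1-Lipschitz for the Hamming distance, so moving to a neighbour changes the exponent by at
  most \<beta>.\<close>

lemma hamming_le_length: "hamming x y \<le> length x"
proof -
  have "{i. i < length x \<and> x ! i \<noteq> y ! i} \<subseteq> {..<length x}" by auto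
  then show ?thesis unfolding hamming_def by (metis card_lessThan card_mono finite_lessThan)
qed

lemma hamming_eq_0_imp_eq: "length x = length y \<Longrightarrow> hamming x y = 0 \<Longrightarrow> x = y"
  unfolding hamming_def by (auto intro: nth_equalityI)

lemma hamming_triangle:
  assumes "length x = length z"
  shows "hamming z y \<le> hamming z x + hamming x y"
proof -
  let ?D = "\<lambda>u v. {i. i < length u \<and> u ! i \<noteq> v ! i}"
  have "card (?D z y) \<le> card (?D z x \<union> ?D x y)"
    using assms by (intro card_mono) auto
  also have "\<dots> \<le> card (?D z x) + card (?D x y)"
    by (rule card_Un_le)
  finally show ?thesis unfolding hamming_def .
qed

lemma finite_hamming_image:
  assumes "U \<subseteq> datasets n"
  shows "finite ((\<lambda>y. hamming y x) ` U)"
proof -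
  have "(\<lambda>y. hamming y x) ` U \<subseteq> {..n}"
    using assms hamming_le_length unfolding datasets_def by fastforce
  then show ?thesis using finite_subset by blast
qed

lemma ud_le_hamming:
  assumes "U \<subseteq> datasets n" "y \<in> U"
  shows "ud U x \<le> hamming y x"
  unfolding ud_def using finite_hamming_image[OF assms(1)] assms(2) by simp

lemma ud_attained:
  assumes "U \<subseteq> datasets n" "U \<noteq> {}"
  obtains y where "y \<in> U" "ud U x = hamming y x"
proof -
  have "ud U x \<in> (\<lambda>y. hamming y x) ` U"
    unfolding ud_def using finite_hamming_image[OF assms(1)] assms(2) by (intro Min_in) auto
  then show ?thesis using that by auto
qed

lemma ud_eq_0_iff:
  assumes "U \<subseteq> datasets n" "U \<noteq> {}" "x \<in> datasets n"
  shows "ud U x = 0 \<longleftrightarrow> x \<in> U"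
proof
  assume "ud U x = 0"
  obtain y where "y \<in> U" "ud U x = hamming y x"
    using ud_attained[OF assms(1,2)] .
  moreover from this assms have "length y = length x"
    unfolding datasets_def by auto
  ultimately show "x \<in> U"
    using \<open>ud U x = 0\<close> hamming_eq_0_imp_eq by metis
next
  assume "x \<in> U"
  have "hamming x x = 0"
    unfolding hamming_def by simp
  then show "ud U x = 0"
    using ud_le_hamming[OF assms(1) \<open>x \<in> U\<close>, of x] by simp
qed

lemma ud_neighbour_le:
  assumes "U \<subseteq> datasets n" "U \<noteq> {}" "x \<in> datasets n" "hamming x y = 1"
  shows "ud U y \<le> ud U x + 1"
proof -
  obtain z where z: "z \<in> U" "ud U x = hamming z x"
    using ud_attained[OF assms(1,2)] .
  have "ud U y \<le> hamming z y"
    using ud_le_hamming[OF assms(1) z(1)] .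
  also have "\<dots> \<le> hamming z x + hamming x y"
    using assms z(1) unfolding datasets_def by (intro hamming_triangle) auto
  finally show ?thesis using z(2) assms(4) by simp
qed

lemma LS_le_GS:
  assumes "finite_GS n f" "x \<in> datasets n"
  shows "LS n f x \<le> GS n f"
  unfolding LS_def GS_def
  using assms unfolding finite_GS_def by (intro cSup_subset_mono) auto

lemma LS_nonneg:
  assumes "finite_GS n f" "x \<in> datasets n"
  shows "0 \<le> LS n f x"
proof -
  have "bdd_above (insert 0 {l1dist (f u) (f v) | u v.
      u \<in> datasets n \<and> v \<in> datasets n \<and> hamming u v = 1})"
    using assms(1) unfolding finite_GS_def by simp
  then have "bdd_above (insert 0 {l1dist (f x) (f y) | y. y \<in> datasets n \<and> hamming x y = 1})"
    by (rule bdd_above_mono) (use assms(2) in auto)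
  then show ?thesis unfolding LS_def by (intro cSup_upper) auto
qed

lemma le_mult_exp_neg_if_le_ln_div:
  fixes L G \<beta> k :: real
  assumes "0 < L" "0 < G" "0 < k" "\<beta> \<le> ln (G / L) / k"
  shows "L \<le> G * exp (- \<beta> * k)"
proof -
  have "\<beta> * k \<le> ln (G / L)"
    using assms(3,4) by (simp add: pos_le_divide_eq)
  then have "exp (\<beta> * k) \<le> G / L"
    using assms(1,2) by (metis divide_pos_pos exp_le_cancel_iff exp_ln)
  then have "L * exp (\<beta> * k) \<le> G"
    using assms(1) by (simp add: le_divide_eq mult.commute)
  then have "L \<le> G / exp (\<beta> * k)"
    by (simp add: pos_le_divide_eq)
  then show ?thesis
    by (simp add: exp_minus divide_inverse)
qed

lemma mult_exp_neg_step_le: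
  fixes G \<beta> a b :: real
  assumes "0 \<le> G" "0 \<le> \<beta>" "b \<le> a + 1"
  shows "G * exp (- \<beta> * a) \<le> exp \<beta> * (G * exp (- \<beta> * b))"
proof -
  have "- \<beta> * a \<le> \<beta> + - \<beta> * b"
    using mult_left_mono[OF assms(3,2)] by (simp add: algebra_simps)
  then have "exp (- \<beta> * a) \<le> exp \<beta> * exp (- \<beta> * b)"
    by (simp flip: exp_add)
  then show ?thesis
    using assms(1) by (simp add: mult_left_mono mult.left_commute)
qed

theorem theorem5:
  fixes n :: nat and f :: "'a list \<Rightarrow> real ^ 'd" and T \<beta> :: real and U :: "'a list set"
  assumes finGS: "finite_GS n f"
    and GSpos: "GS n f > 0"
    and U_def: "U = {x \<in> datasets n. LS n f x > T}"
    and U_ne: "U \<noteq> {}"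
    and beta_pos: "\<beta> > 0"
    and beta_le: "\<forall>x\<in>datasets n - U. LS n f x \<noteq> 0 \<longrightarrow>
                    \<beta> \<le> ln (GS n f / LS n f x) / real (ud U x)"
  shows "smooth_upper_bound n \<beta> f (\<lambda>x. GS n f * exp (- \<beta> * real (ud U x)))"
proof -
  have U_sub: "U \<subseteq> datasets n" using U_def by auto
  show ?thesis
    unfolding smooth_upper_bound_def
  proof (intro conjI ballI impI)
    fix x :: "'a list" assume x: "x \<in> datasets n"
    show "LS n f x \<le> GS n f * exp (- \<beta> * real (ud U x))"
    proof (cases "x \<in> U \<or> LS n f x = 0")
      case True
      then show ?thesis
        using ud_eq_0_iff[OF U_sub U_ne x] LS_le_GS[OF finGS x] GSpos by auto
    next
      case False
      then have "0 < LS n f x" "0 < real (ud U x)"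
        using LS_nonneg[OF finGS x] ud_eq_0_iff[OF U_sub U_ne x] by auto
      with False x show ?thesis
        using beta_le GSpos by (intro le_mult_exp_neg_if_le_ln_div) auto
    qed
  next
    fix x y :: "'a list"
    assume x: "x \<in> datasets n" and "y \<in> datasets n" "hamming x y = 1"
    then have "real (ud U y) \<le> real (ud U x) + 1"
      using ud_neighbour_le[OF U_sub U_ne x] by fastforce
    then show "GS n f * exp (- \<beta> * real (ud U x))
        \<le> exp \<beta> * (GS n f * exp (- \<beta> * real (ud U y)))"
      using GSpos beta_pos by (intro mult_exp_neg_step_le) auto
  qed
qed

end
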